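(* Let $G$ be a finitely generated group, $H\le G$ a subgroup, and $\Omega\le\operatorname{Aut}(G)$ such that $\phi(H)=H$ for all $\phi\in\Omega$. Let $P=\{\phi|_H:\phi\in\Omega\}\le\operatorname{Aut}(H)$. Then $\alpha_{H^P\subseteq G}\preccurlyeq\alpha_{G^\Omega}$.
   Context: Fix a finite generating set $\Sigma$ of $G$ and the word length $|\cdot|_\Sigma$. For $\Omega\le\operatorname{Aut}(G)$, the $\Omega$-automorphic growth function sends $n$ to the number of $\Omega$-orbits of $G$ containing an element of length at most $n$; $\alpha_{G^\Omega}$ is its $\sim$-class. For a subset $U\subseteq G$ and a group $P$ of permutations of $U$, the relative $P$-automorphic growth $\alpha_{U^P\subseteq G}$ is the $\sim$-class of the function sending $n$ to the number of $P$-orbits of $U$ containing an element $u$ with $|u|_\Sigma\le n$ (word length measured in $G$). For non-decreasing non-zero $f,g\colon\mathbb{N}\to\mathbb{N}$, $f\preccurlyeq g$ means there is $\lambda\in\mathbb{N}\setminus\{0\}$ with $f(n)\le\lambda g(\lambda n+\lambda)+\lambda$ for all $n$, and $f\sim g$ means $f\preccurlyeq g$ and $g\preccurlyeq f$. These classes do not depend on $\Sigma$. *)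

theory Defs
  imports "HOL-Algebra.Algebra"
begin

definition word_length :: "('a, 'b) monoid_scheme \<Rightarrow> 'a set \<Rightarrow> 'a \<Rightarrow> nat" where
  "word_length G S x =
     (LEAST n. \<exists>ws. length ws = n \<and> set ws \<subseteq> S \<union> m_inv G ` S
                 \<and> foldr (\<lambda>a b. a \<otimes>\<^bsub>G\<^esub> b) ws \<one>\<^bsub>G\<^esub> = x)"

definition orbit_of :: "('a \<Rightarrow> 'a) set \<Rightarrow> 'a \<Rightarrow> 'a set" where
  "orbit_of P u = (\<lambda>p. p u) ` P"

definition rel_aut_growth ::
  "('a, 'b) monoid_scheme \<Rightarrow> 'a set \<Rightarrow> 'a set \<Rightarrow> ('a \<Rightarrow> 'a) set \<Rightarrow> nat \<Rightarrow> nat" where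
  "rel_aut_growth G S U P n =
     card {Orb \<in> orbit_of P ` U. \<exists>u\<in>Orb. word_length G S u \<le> n}"

definition aut_growth ::
  "('a, 'b) monoid_scheme \<Rightarrow> 'a set \<Rightarrow> ('a \<Rightarrow> 'a) set \<Rightarrow> nat \<Rightarrow> nat" where
  "aut_growth G S \<Omega> n =
     card {Orb \<in> orbit_of \<Omega> ` carrier G. \<exists>u\<in>Orb. word_length G S u \<le> n}"

definition growth_le :: "(nat \<Rightarrow> nat) \<Rightarrow> (nat \<Rightarrow> nat) \<Rightarrow> bool" where
  "growth_le f g \<longleftrightarrow> (\<exists>c::nat. c \<noteq> 0 \<and> (\<forall>n. f n \<le> c * g (c * n + c) + c))"

end

(* For u in H the P-orbit of u is, as a set, its Omega-orbit. So every P-orbit counted by the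
   relative growth function is one of the Omega-orbits counted by the automorphic growth function,
   and the two growth functions compare pointwise. The only thing to check is that the counted
   Omega-orbits form a finite set: Omega-orbits partition G, so each counted orbit is the orbit of
   one of its elements of length at most n, and there are finitely many of those because Sigma is
   finite. *)

theory Submission
  imports Defs
begin

lemma (in monoid) multlist_append:
  assumes "set ws \<subseteq> carrier G" and "set vs \<subseteq> carrier G"
  shows "foldr (\<otimes>) (ws @ vs) \<one> = foldr (\<otimes>) ws \<one> \<otimes> foldr (\<otimes>) vs \<one>"
  using assms by (induction ws) (auto simp: m_assoc)

lemma (in group) generate_imp_word:
  assumes "S \<subseteq> carrier G" and "x \<in> generate G S"
  shows "\<exists>ws. set ws \<subseteq> S \<union> m_inv G ` S \<and> foldr (\<otimes>) ws \<one> = x"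
  using assms(2)
proof (induction rule: generate.induct)
  case one
  show ?case by (rule exI[of _ "[]"]) simp
next
  case (incl h)
  then show ?case using assms(1) by (intro exI[of _ "[h]"]) auto
next
  case (inv h)
  then show ?case using assms(1) by (intro exI[of _ "[inv h]"]) auto
next
  case (eng h1 h2)
  then obtain ws vs where
    ws: "set ws \<subseteq> S \<union> m_inv G ` S" "foldr (\<otimes>) ws \<one> = h1" and
    vs: "set vs \<subseteq> S \<union> m_inv G ` S" "foldr (\<otimes>) vs \<one> = h2"
    by blast
  have "S \<union> m_inv G ` S \<subseteq> carrier G"
    using assms(1) by auto
  then show ?case
    using ws vs multlist_append[of ws vs] by (intro exI[of _ "ws @ vs"]) auto
qed

lemma (in group) word_length_attained:
  assumes "S \<subseteq> carrier G" and "generate G S = carrier G" and "x \<in> carrier G"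
  shows "\<exists>ws. length ws = word_length G S x \<and> set ws \<subseteq> S \<union> m_inv G ` S \<and> foldr (\<otimes>) ws \<one> = x"
proof -
  let ?is_word_length = "\<lambda>n. \<exists>ws. length ws = n \<and> set ws \<subseteq> S \<union> m_inv G ` S \<and> foldr (\<otimes>) ws \<one> = x"
  have "\<exists>n. ?is_word_length n"
    using generate_imp_word assms by blast
  then have "?is_word_length (LEAST n. ?is_word_length n)"
    by (rule LeastI_ex)
  then show ?thesis
    unfolding word_length_def .
qed

lemma (in group) finite_word_length_ball:
  assumes "finite S" and "S \<subseteq> carrier G" and "generate G S = carrier G"
  shows "finite {x \<in> carrier G. word_length G S x \<le> n}"
proof -
  let ?words = "{ws. set ws \<subseteq> S \<union> m_inv G ` S \<and> length ws \<le> n}"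
  have "finite ?words"
    using finite_lists_length_le[of "S \<union> m_inv G ` S" n] assms(1) by simp
  moreover have "{x \<in> carrier G. word_length G S x \<le> n} \<subseteq> (\<lambda>ws. foldr (\<otimes>) ws \<one>) ` ?words"
  proof
    fix x
    assume x: "x \<in> {x \<in> carrier G. word_length G S x \<le> n}"
    then obtain ws where "length ws = word_length G S x" "set ws \<subseteq> S \<union> m_inv G ` S"
        "foldr (\<otimes>) ws \<one> = x"
      using word_length_attained[OF assms(2,3)] by blast
    then show "x \<in> (\<lambda>ws. foldr (\<otimes>) ws \<one>) ` ?words"
      using x by force
  qed
  ultimately show ?thesis
    by (rule finite_surj)
qed

lemma subgroup_BijGroup_action:
  assumes "subgroup \<Omega> (BijGroup E)"
  shows "group_action (BijGroup E\<lparr>carrier := \<Omega>\<rparr>) E (\<lambda>\<phi>. \<phi>)"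
proof -
  interpret Bij: group "BijGroup E"
    by (rule group_BijGroup)
  have "group_hom (BijGroup E) (BijGroup E) (\<lambda>\<phi>. \<phi>)"
    by unfold_locales (auto simp: hom_def)
  then show ?thesis
    unfolding group_action_def using group_hom.induced_group_hom'[OF _ assms] by blast
qed

lemma (in group) subgroup_AutoGroup_imp_subgroup_BijGroup:
  assumes "subgroup \<Omega> (AutoGroup G)"
  shows "subgroup \<Omega> (BijGroup (carrier G))"
  using group.incl_subgroup[OF group_BijGroup subgroup_auto] assms
  by (simp add: AutoGroup_def)

lemma orbit_of_eq_orbit:
  "orbit_of \<Omega> x = orbit (BijGroup E\<lparr>carrier := \<Omega>\<rparr>) (\<lambda>\<phi>. \<phi>) x"
  by (auto simp: orbit_of_def orbit_def)

lemma orbit_of_subset: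
  assumes "subgroup \<Omega> (BijGroup E)" and "x \<in> E"
  shows "orbit_of \<Omega> x \<subseteq> E"
proof -
  interpret group_action "BijGroup E\<lparr>carrier := \<Omega>\<rparr>" E "\<lambda>\<phi>. \<phi>"
    using subgroup_BijGroup_action[OF assms(1)] .
  show ?thesis
    using element_image[OF _ assms(2)] by (auto simp: orbit_of_def)
qed

lemma orbit_of_eq_if_mem:
  assumes "subgroup \<Omega> (BijGroup E)" and "x \<in> E" and "y \<in> orbit_of \<Omega> x"
  shows "orbit_of \<Omega> y = orbit_of \<Omega> x"
proof -
  interpret group_action "BijGroup E\<lparr>carrier := \<Omega>\<rparr>" E "\<lambda>\<phi>. \<phi>"
    using subgroup_BijGroup_action[OF assms(1)] .
  have y: "y \<in> E"
    using orbit_of_subset[OF assms(1,2)] assms(3) by blast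
  have "y \<in> orbit (BijGroup E\<lparr>carrier := \<Omega>\<rparr>) (\<lambda>\<phi>. \<phi>) x"
    using assms(3) by (simp add: orbit_of_eq_orbit[where E = E])
  moreover have "x \<in> orbit (BijGroup E\<lparr>carrier := \<Omega>\<rparr>) (\<lambda>\<phi>. \<phi>) y"
    using orbit_sym[OF assms(2) y] calculation .
  ultimately show ?thesis
    using orbit_trans[OF assms(2) y] orbit_trans[OF y assms(2)]
      orbit_of_subset[OF assms(1) assms(2)] orbit_of_subset[OF assms(1) y]
    unfolding orbit_of_eq_orbit[where E = E] by blast
qed

lemma orbit_of_restrict:
  assumes "u \<in> H"
  shows "orbit_of ((\<lambda>\<phi>. restrict \<phi> H) ` \<Omega>) u = orbit_of \<Omega> u"
  using assms unfolding orbit_of_def image_image by simp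

lemma (in group) finite_aut_growth_orbits:
  assumes "finite S" and "S \<subseteq> carrier G" and "generate G S = carrier G"
    and "subgroup \<Omega> (AutoGroup G)"
  shows "finite {Orb \<in> orbit_of \<Omega> ` carrier G. \<exists>u\<in>Orb. word_length G S u \<le> n}"
proof -
  have \<Omega>: "subgroup \<Omega> (BijGroup (carrier G))"
    using subgroup_AutoGroup_imp_subgroup_BijGroup[OF assms(4)] .
  have "{Orb \<in> orbit_of \<Omega> ` carrier G. \<exists>u\<in>Orb. word_length G S u \<le> n}
          \<subseteq> orbit_of \<Omega> ` {x \<in> carrier G. word_length G S x \<le> n}"
    using orbit_of_subset[OF \<Omega>] orbit_of_eq_if_mem[OF \<Omega>] by blast
  then show ?thesis
    using finite_surj[OF finite_word_length_ball[OF assms(1-3)]] by blast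
qed

lemma (in group) mono_aut_growth:
  assumes "finite S" and "S \<subseteq> carrier G" and "generate G S = carrier G"
    and "subgroup \<Omega> (AutoGroup G)"
  shows "mono (aut_growth G S \<Omega>)"
proof (rule monoI)
  fix m n :: nat
  assume "m \<le> n"
  then show "aut_growth G S \<Omega> m \<le> aut_growth G S \<Omega> n"
    unfolding aut_growth_def
    by (intro card_mono[OF finite_aut_growth_orbits[OF assms]]) (auto intro: order_trans)
qed

lemma (in group) rel_aut_growth_restrict_le:
  assumes "finite S" and "S \<subseteq> carrier G" and "generate G S = carrier G"
    and "subgroup \<Omega> (AutoGroup G)" and "H \<subseteq> carrier G"
  shows "rel_aut_growth G S H ((\<lambda>\<phi>. restrict \<phi> H) ` \<Omega>) n \<le> aut_growth G S \<Omega> n"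
  unfolding rel_aut_growth_def aut_growth_def
proof (rule card_mono[OF finite_aut_growth_orbits[OF assms(1-4)]])
  show "{Orb \<in> orbit_of ((\<lambda>\<phi>. restrict \<phi> H) ` \<Omega>) ` H. \<exists>u\<in>Orb. word_length G S u \<le> n}
      \<subseteq> {Orb \<in> orbit_of \<Omega> ` carrier G. \<exists>u\<in>Orb. word_length G S u \<le> n}"
    using assms(5) orbit_of_restrict[of _ H \<Omega>] by auto
qed

lemma growth_le_if_le_mono:
  assumes "\<And>n. f n \<le> g n" and "mono g"
  shows "growth_le f g"
  unfolding growth_le_def
proof (intro exI[of _ 1] conjI allI)
  fix n
  have "f n \<le> g (n + 1)"
    using assms(1)[of n] monoD[OF assms(2), of n "n + 1"] by simp
  then show "f n \<le> 1 * g (1 * n + 1) + 1"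
    by simp
qed simp

theorem mainTheorem14:
  fixes G :: "('a, 'b) monoid_scheme" and \<Sigma> H :: "'a set" and \<Omega> :: "('a \<Rightarrow> 'a) set"
  assumes "group G"
    and "finite \<Sigma>" and "\<Sigma> \<subseteq> carrier G" and "generate G \<Sigma> = carrier G"
    and "subgroup H G"
    and "subgroup \<Omega> (AutoGroup G)"
    and "\<forall>\<phi>\<in>\<Omega>. \<phi> ` H = H"
  shows "growth_le (rel_aut_growth G \<Sigma> H ((\<lambda>\<phi>. restrict \<phi> H) ` \<Omega>)) (aut_growth G \<Sigma> \<Omega>)"
proof -
  interpret group G
    by (rule assms(1))
  have "H \<subseteq> carrier G"
    using assms(5) subgroup.subset by blast
  then show ?thesis
    using growth_le_if_le_mono rel_aut_growth_restrict_le mono_aut_growth assms(2-4,6) by blast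
qed

end
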